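(* Let $(u,\phi)$ be a smooth solution of the periodic problem (PF-NS). Then for all $t>0$, $$\frac{d}{dt}\Big(\frac12\|u(t)\|^2+E(\phi(t))\Big)+\mu\|\nabla u\|^2+\gamma\Big\|\frac{\delta E}{\delta\phi}\Big\|^2=0.$$
   Context: Setting. $Q$ is the unit cube in $\mathbb R^3$ and all functions are $Q$-periodic; $\|\cdot\|$ is the $L^2(Q)$ norm. Fixed positive constants: $k,\varepsilon,\gamma,\mu,M_1,M_2$. For a scalar $\phi$: $f(\phi)=-\varepsilon\Delta\phi+\frac1\varepsilon(\phi^2-1)\phi$, $g(\phi)=-\Delta f(\phi)+\frac1{\varepsilon^2}(3\phi^2-1)f(\phi)$, $A(\phi)=\int_Q\phi$, $B(\phi)=\int_Q(\frac\varepsilon2|\nabla\phi|^2+\frac1{4\varepsilon}(\phi^2-1)^2)$, $E(\phi)=\frac{k}{2\varepsilon}\int_Q|f(\phi)|^2+\frac12M_1(A(\phi)-\alpha)^2+\frac12M_2(B(\phi)-\beta)^2$ with $\alpha=A(\phi_0)$, $\beta=B(\phi_0)$, and $\frac{\delta E}{\delta\phi}=kg(\phi)+M_1(A(\phi)-\alpha)+M_2(B(\phi)-\beta)f(\phi)$. Problem (PF-NS): $u_t+u\cdot\nabla u+\nabla P=\mu\Delta u+\frac{\delta E}{\delta\phi}\nabla\phi$, $\nabla\cdot u=0$, $\phi_t+u\cdot\nabla\phi=-\gamma\frac{\delta E}{\delta\phi}$, periodic in $x$, $u(0)=u_0$ (divergence free, zero mean), $\phi(0)=\phi_0$. *)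

theory Defs
  imports "HOL-Analysis.Analysis"
begin

type_synonym sp = "real ^ 3"

definition Qcube :: "sp set" where
  "Qcube = cbox 0 One"

text \<open>C-infinity on an open set S: there is a family of functions containing f,
  closed under taking directional (Frechet) derivatives, all of whose members are
  continuous on S and differentiable at every point of S.\<close>
definition smooth_on :: "'a::real_normed_vector set \<Rightarrow> ('a \<Rightarrow> 'b::real_normed_vector) \<Rightarrow> bool" where
  "smooth_on S f \<longleftrightarrow> (\<exists>F. f \<in> F \<and>
     (\<forall>g\<in>F. continuous_on S g \<and> (\<forall>x\<in>S. g differentiable (at x)) \<and>
              (\<forall>v. (\<lambda>x. frechet_derivative g (at x) v) \<in> F)))"

definition periodic :: "(sp \<Rightarrow> 'b) \<Rightarrow> bool" where
  "periodic h \<longleftrightarrow> (\<forall>x i. h (x + axis i 1) = h x)"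

definition pd :: "3 \<Rightarrow> (sp \<Rightarrow> real) \<Rightarrow> sp \<Rightarrow> real" where
  "pd i h x = frechet_derivative h (at x) (axis i 1)"

definition grad :: "(sp \<Rightarrow> real) \<Rightarrow> sp \<Rightarrow> real ^ 3" where
  "grad h x = (\<chi> i. pd i h x)"

definition lapl :: "(sp \<Rightarrow> real) \<Rightarrow> sp \<Rightarrow> real" where
  "lapl h x = (\<Sum>i\<in>UNIV. pd i (pd i h) x)"

definition vlapl :: "(sp \<Rightarrow> real ^ 3) \<Rightarrow> sp \<Rightarrow> real ^ 3" where
  "vlapl v x = (\<chi> j. lapl (\<lambda>y. v y $ j) x)"

definition divg :: "(sp \<Rightarrow> real ^ 3) \<Rightarrow> sp \<Rightarrow> real" where
  "divg v x = (\<Sum>i\<in>UNIV. pd i (\<lambda>y. v y $ i) x)"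

definition advect :: "(sp \<Rightarrow> real ^ 3) \<Rightarrow> (sp \<Rightarrow> real ^ 3) \<Rightarrow> sp \<Rightarrow> real ^ 3" where
  "advect v w x = (\<chi> j. \<Sum>i\<in>UNIV. v x $ i * pd i (\<lambda>y. w y $ j) x)"

definition L2sq :: "(sp \<Rightarrow> real) \<Rightarrow> real" where
  "L2sq h = integral Qcube (\<lambda>x. (h x)\<^sup>2)"

definition L2sqv :: "(sp \<Rightarrow> real ^ 3) \<Rightarrow> real" where
  "L2sqv v = integral Qcube (\<lambda>x. (norm (v x))\<^sup>2)"

definition gradL2sqv :: "(sp \<Rightarrow> real ^ 3) \<Rightarrow> real" where
  "gradL2sqv v = integral Qcube (\<lambda>x. \<Sum>j\<in>UNIV. (norm (grad (\<lambda>y. v y $ j) x))\<^sup>2)"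

definition fop :: "real \<Rightarrow> (sp \<Rightarrow> real) \<Rightarrow> sp \<Rightarrow> real" where
  "fop \<epsilon> \<phi> x = - \<epsilon> * lapl \<phi> x + (1/\<epsilon>) * ((\<phi> x)\<^sup>2 - 1) * \<phi> x"

definition gop :: "real \<Rightarrow> (sp \<Rightarrow> real) \<Rightarrow> sp \<Rightarrow> real" where
  "gop \<epsilon> \<phi> x = - lapl (fop \<epsilon> \<phi>) x + (1/\<epsilon>\<^sup>2) * (3 * (\<phi> x)\<^sup>2 - 1) * fop \<epsilon> \<phi> x"

definition Aop :: "(sp \<Rightarrow> real) \<Rightarrow> real" where
  "Aop \<phi> = integral Qcube \<phi>"

definition Bop :: "real \<Rightarrow> (sp \<Rightarrow> real) \<Rightarrow> real" where
  "Bop \<epsilon> \<phi> = integral Qcube (\<lambda>x. \<epsilon>/2 * (norm (grad \<phi> x))\<^sup>2 + 1/(4*\<epsilon>) * ((\<phi> x)\<^sup>2 - 1)\<^sup>2)"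

definition Eop :: "real \<Rightarrow> real \<Rightarrow> real \<Rightarrow> real \<Rightarrow> real \<Rightarrow> real \<Rightarrow> (sp \<Rightarrow> real) \<Rightarrow> real" where
  "Eop k \<epsilon> M1 M2 \<alpha> \<beta> \<phi> =
     k/(2*\<epsilon>) * integral Qcube (\<lambda>x. (fop \<epsilon> \<phi> x)\<^sup>2)
     + 1/2 * M1 * (Aop \<phi> - \<alpha>)\<^sup>2 + 1/2 * M2 * (Bop \<epsilon> \<phi> - \<beta>)\<^sup>2"

definition dEop :: "real \<Rightarrow> real \<Rightarrow> real \<Rightarrow> real \<Rightarrow> real \<Rightarrow> real \<Rightarrow> (sp \<Rightarrow> real) \<Rightarrow> sp \<Rightarrow> real" where
  "dEop k \<epsilon> M1 M2 \<alpha> \<beta> \<phi> x =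
     k * gop \<epsilon> \<phi> x + M1 * (Aop \<phi> - \<alpha>) + M2 * (Bop \<epsilon> \<phi> - \<beta>) * fop \<epsilon> \<phi> x"

end

theory Submission
  imports Defs
begin

text \<open>Differentiate the energy under the integral sign. Testing the momentum equation with
  \<open>u\<close>, the advection and pressure terms are integrals of divergences (as \<open>div u = 0\<close>) and
  vanish on the periodic cell, and the viscous term gives \<open>-\<mu>\<parallel>\<nabla>u\<parallel>\<^sup>2\<close>; hence
  \<open>d/dt \<parallel>u\<parallel>\<^sup>2/2 = \<integral> (\<delta>E/\<delta>\<phi>) u\<cdot>\<nabla>\<phi> - \<mu>\<parallel>\<nabla>u\<parallel>\<^sup>2\<close>. Since the Laplacian is symmetric on
  periodic functions, two integrations by parts give \<open>d/dt E(\<phi>) = \<integral> (\<delta>E/\<delta>\<phi>) \<phi>\<^sub>t\<close>, and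
  substituting \<open>\<phi>\<^sub>t = -\<gamma> \<delta>E/\<delta>\<phi> - u\<cdot>\<nabla>\<phi>\<close> the coupling terms cancel. The calculus is done in
  an algebra of smooth functions of \<open>(t, x)\<close>, \<open>t > 0\<close>, closed under directional derivatives,
  where second derivatives commute and time derivatives pass under the integral.\<close>

section \<open>Directional derivatives and algebras of smooth functions\<close>

definition dderiv :: "'a::real_normed_vector \<Rightarrow> ('a \<Rightarrow> real) \<Rightarrow> 'a \<Rightarrow> real" where
  "dderiv v g p = frechet_derivative g (at p) v"

lemma dderiv_eq: "(g has_derivative g') (at p) \<Longrightarrow> dderiv v g p = g' v"
  unfolding dderiv_def by (metis frechet_derivative_at)

lemma has_derivative_dderiv:
  "g differentiable (at p) \<Longrightarrow> (g has_derivative (\<lambda>v. dderiv v g p)) (at p)"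
  unfolding dderiv_def by (simp add: frechet_derivative_works[symmetric] eta_contract_eq)

lemma dderiv_const [simp]: "dderiv v (\<lambda>p. c) p = 0"
  by (rule dderiv_eq) (rule has_derivative_const)

lemma dderiv_cong_open:
  assumes "open S" "\<forall>q\<in>S. h q = g q" "p \<in> S"
  shows "dderiv v h p = dderiv v g p"
proof -
  have "(h has_derivative D) (at p) \<longleftrightarrow> (g has_derivative D) (at p)" for D
    using has_derivative_transform_within_open[OF _ assms(1,3)] assms(2) by metis
  then show ?thesis unfolding dderiv_def frechet_derivative_def by simp
qed

text \<open>The clause \<open>agree_on\<close> is needed because Frechet derivatives at points of \<open>S\<close> say
  nothing about a function off \<open>S\<close>: the derivative of a sum, say, only agrees with the sum of
  the derivatives on \<open>S\<close>.\<close>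
inductive_set gen_alg :: "'a::real_normed_vector set \<Rightarrow> ('a \<Rightarrow> real) set \<Rightarrow> ('a \<Rightarrow> real) set"
  for S A where
  gen: "g \<in> A \<Longrightarrow> g \<in> gen_alg S A"
| const [simp]: "(\<lambda>p. c) \<in> gen_alg S A"
| add [simp]: "g \<in> gen_alg S A \<Longrightarrow> h \<in> gen_alg S A \<Longrightarrow> (\<lambda>p. g p + h p) \<in> gen_alg S A"
| mult [simp]: "g \<in> gen_alg S A \<Longrightarrow> h \<in> gen_alg S A \<Longrightarrow> (\<lambda>p. g p * h p) \<in> gen_alg S A"
| agree_on: "g \<in> gen_alg S A \<Longrightarrow> \<forall>p\<in>S. h p = g p \<Longrightarrow> h \<in> gen_alg S A"

lemma gen_alg_mono: "A \<subseteq> B \<Longrightarrow> gen_alg S A \<subseteq> gen_alg S B"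
proof
  fix g assume "A \<subseteq> B" "g \<in> gen_alg S A"
  then show "g \<in> gen_alg S B"
    by (induction rule: gen_alg.induct[OF \<open>g \<in> gen_alg S A\<close>]) (auto intro: gen_alg.intros)
qed

lemma continuous_vanishing_integrals_imp_zero:
  fixes K :: "real \<Rightarrow> real"
  assumes r0: "r0 > 0" and K: "continuous_on {0..r0} K"
    and zero: "\<And>b. 0 \<le> b \<Longrightarrow> b \<le> r0 \<Longrightarrow> integral {0..b} K = 0"
  shows "K 0 = 0"
proof -
  have "((\<lambda>b. integral {0..b} K) has_vector_derivative 0) (at 0 within {0..r0})"
    by (rule has_vector_derivative_transform_within[where d=1 and f="\<lambda>_. 0"])
      (use r0 in \<open>auto simp: zero\<close>)
  moreover have "((\<lambda>b. integral {0..b} K) has_vector_derivative K 0) (at 0 within {0..r0})"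
    using integral_has_vector_derivative[OF K] r0 by auto
  ultimately show ?thesis
    using vector_derivative_unique_within_closed_interval[of 0 r0 0] r0 by auto
qed

locale smooth_gen =
  fixes S :: "'a::real_normed_vector set" and A :: "('a \<Rightarrow> real) set"
  assumes open_S: "open S"
    and gen_differentiable: "g \<in> A \<Longrightarrow> p \<in> S \<Longrightarrow> g differentiable (at p)"
    and gen_dderiv: "g \<in> A \<Longrightarrow> dderiv v g \<in> gen_alg S A"
begin

abbreviation Alg where "Alg \<equiv> gen_alg S A"

lemma alg_smooth:
  assumes "g \<in> Alg"
  shows "(\<forall>p\<in>S. g differentiable (at p)) \<and> (\<forall>v. dderiv v g \<in> Alg)"
  using assms
proof induction
  case (gen g)
  then show ?case using gen_differentiable gen_dderiv by blast
next
  case (const c)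
  then show ?case by (simp add: fun_eq_iff[symmetric])
next
  case (add g h)
  have "dderiv v (\<lambda>p. g p + h p) \<in> Alg" for v
  proof (rule agree_on)
    show "(\<lambda>p. dderiv v g p + dderiv v h p) \<in> Alg" using add.IH by simp
    show "\<forall>p\<in>S. dderiv v (\<lambda>p. g p + h p) p = dderiv v g p + dderiv v h p"
      using add.IH by (auto intro!: dderiv_eq has_derivative_add has_derivative_dderiv)
  qed
  then show ?case using add.IH by auto
next
  case (mult g h)
  have "dderiv v (\<lambda>p. g p * h p) \<in> Alg" for v
  proof (rule agree_on)
    show "(\<lambda>p. g p * dderiv v h p + dderiv v g p * h p) \<in> Alg" using mult by simp
    show "\<forall>p\<in>S. dderiv v (\<lambda>p. g p * h p) p = g p * dderiv v h p + dderiv v g p * h p"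
      using mult.IH by (auto intro!: dderiv_eq has_derivative_mult has_derivative_dderiv)
  qed
  then show ?case using mult.IH by auto
next
  case (agree_on g h)
  have "h differentiable (at p)" if "p \<in> S" for p
    using agree_on that has_derivative_transform_within_open[OF _ open_S]
    unfolding differentiable_def by metis
  moreover have "dderiv v h \<in> Alg" for v
    using agree_on dderiv_cong_open[OF open_S] by (blast intro: gen_alg.agree_on)
  ultimately show ?case by blast
qed

lemma dderiv_mem [simp]: "g \<in> Alg \<Longrightarrow> dderiv v g \<in> Alg"
  using alg_smooth by blast

lemma alg_has_derivative:
  "g \<in> Alg \<Longrightarrow> p \<in> S \<Longrightarrow> (g has_derivative (\<lambda>v. dderiv v g p)) (at p)"
  using alg_smooth has_derivative_dderiv by blast

lemma alg_continuous_on: "g \<in> Alg \<Longrightarrow> continuous_on S g"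
  by (meson alg_has_derivative continuous_at_imp_continuous_on has_derivative_continuous)

lemma dderiv_scaleR: "g \<in> Alg \<Longrightarrow> p \<in> S \<Longrightarrow> dderiv (c *\<^sub>R v) g p = c * dderiv v g p"
  using linear_scale[OF has_derivative_linear[OF alg_has_derivative]] by simp

lemma cmult_mem: "g \<in> Alg \<Longrightarrow> (\<lambda>p. c * g p) \<in> Alg"
  by simp

lemma divide_mem [simp]: "g \<in> Alg \<Longrightarrow> (\<lambda>p. g p / c) \<in> Alg"
  using cmult_mem[of g "inverse c"] by (simp add: divide_inverse mult.commute)

lemma minus_mem [simp]: "g \<in> Alg \<Longrightarrow> (\<lambda>p. - g p) \<in> Alg"
  using cmult_mem[of g "-1"] by simp

lemma diff_mem [simp]: "g \<in> Alg \<Longrightarrow> h \<in> Alg \<Longrightarrow> (\<lambda>p. g p - h p) \<in> Alg"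
  using add[OF _ minus_mem, of g h] by simp

lemma power2_mem [simp]: "g \<in> Alg \<Longrightarrow> (\<lambda>p. (g p)\<^sup>2) \<in> Alg"
  using mult[of g S A g] by (simp add: power2_eq_square)

lemma sum_mem [simp]: "(\<And>i. i \<in> I \<Longrightarrow> f i \<in> Alg) \<Longrightarrow> (\<lambda>p. \<Sum>i\<in>I. f i p) \<in> Alg"
  by (induction I rule: infinite_finite_induct) simp_all

lemma dderiv_add [simp]:
  "g \<in> Alg \<Longrightarrow> h \<in> Alg \<Longrightarrow> p \<in> S \<Longrightarrow> dderiv v (\<lambda>p. g p + h p) p = dderiv v g p + dderiv v h p"
  by (intro dderiv_eq has_derivative_add alg_has_derivative)

lemma dderiv_mult [simp]:
  "g \<in> Alg \<Longrightarrow> h \<in> Alg \<Longrightarrow> p \<in> S \<Longrightarrow>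
    dderiv v (\<lambda>p. g p * h p) p = g p * dderiv v h p + dderiv v g p * h p"
  by (intro dderiv_eq has_derivative_mult alg_has_derivative)

lemma dderiv_minus [simp]: "g \<in> Alg \<Longrightarrow> p \<in> S \<Longrightarrow> dderiv v (\<lambda>p. - g p) p = - dderiv v g p"
  by (intro dderiv_eq has_derivative_minus alg_has_derivative)

lemma dderiv_diff [simp]:
  "g \<in> Alg \<Longrightarrow> h \<in> Alg \<Longrightarrow> p \<in> S \<Longrightarrow> dderiv v (\<lambda>p. g p - h p) p = dderiv v g p - dderiv v h p"
  by (intro dderiv_eq has_derivative_diff alg_has_derivative)

lemma dderiv_divide [simp]: "g \<in> Alg \<Longrightarrow> p \<in> S \<Longrightarrow> dderiv v (\<lambda>p. g p / c) p = dderiv v g p / c"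
  using dderiv_mult[of g "\<lambda>_. inverse c" p v] by (simp add: divide_inverse)

lemma dderiv_power2 [simp]:
  "g \<in> Alg \<Longrightarrow> p \<in> S \<Longrightarrow> dderiv v (\<lambda>p. (g p)\<^sup>2) p = 2 * g p * dderiv v g p"
  using dderiv_mult[of g g p v] by (simp add: power2_eq_square)

lemma dderiv_sum [simp]:
  "(\<And>i. i \<in> I \<Longrightarrow> f i \<in> Alg) \<Longrightarrow> p \<in> S \<Longrightarrow>
    dderiv v (\<lambda>p. \<Sum>i\<in>I. f i p) p = (\<Sum>i\<in>I. dderiv v (f i) p)"
  by (induction I rule: infinite_finite_induct) simp_all

lemma alg_has_real_derivative_line:
  assumes "g \<in> Alg" "q + r *\<^sub>R w \<in> S"
  shows "((\<lambda>r. g (q + r *\<^sub>R w)) has_real_derivative dderiv w g (q + r *\<^sub>R w)) (at r)"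
proof -
  have "((\<lambda>r. g (q + r *\<^sub>R w)) has_derivative (\<lambda>h. dderiv (h *\<^sub>R w) g (q + r *\<^sub>R w))) (at r)"
    using alg_has_derivative[OF assms]
    by (rule has_derivative_compose[rotated]) (auto intro!: derivative_eq_intros)
  then show ?thesis
    unfolding has_field_derivative_def using dderiv_scaleR[OF assms]
    by (simp add: mult.commute[of _ "dderiv w g _"] eta_contract_eq)
qed

lemma integral_dderiv_line:
  assumes "g \<in> Alg" "0 \<le> b" "\<And>r. r \<in> {0..b} \<Longrightarrow> q + r *\<^sub>R w \<in> S"
  shows "integral {0..b} (\<lambda>r. dderiv w g (q + r *\<^sub>R w)) = g (q + b *\<^sub>R w) - g q"
proof -
  have "((\<lambda>r. dderiv w g (q + r *\<^sub>R w)) has_integral g (q + b *\<^sub>R w) - g (q + 0 *\<^sub>R w)) {0..b}"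
    using assms
    by (intro fundamental_theorem_of_calculus)
       (auto intro!: DERIV_subset[OF alg_has_real_derivative_line]
             simp: has_real_derivative_iff_has_vector_derivative[symmetric])
  then show ?thesis by (simp add: integral_unique)
qed

lemma S_contains_small_parallelogram:
  assumes "p \<in> S"
  obtains r0 where "r0 > 0" "\<And>a r. \<bar>a\<bar> < r0 \<Longrightarrow> \<bar>r\<bar> \<le> r0 \<Longrightarrow> p + r *\<^sub>R w + a *\<^sub>R v \<in> S"
proof -
  obtain \<delta> where "\<delta> > 0" and ball: "ball p \<delta> \<subseteq> S"
    using open_S assms openE by blast
  have N: "norm v + norm w + 1 > 0"
    using norm_ge_zero[of v] norm_ge_zero[of w] by linarith
  define r0 where "r0 = \<delta> / (norm v + norm w + 1)"
  have r0: "r0 > 0" using \<open>\<delta> > 0\<close> N by (simp add: r0_def)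
  moreover have "p + r *\<^sub>R w + a *\<^sub>R v \<in> S" if "\<bar>a\<bar> < r0" "\<bar>r\<bar> \<le> r0" for a r
  proof -
    have "norm (r *\<^sub>R w + a *\<^sub>R v) \<le> \<bar>r\<bar> * norm w + \<bar>a\<bar> * norm v"
      by (metis norm_scaleR norm_triangle_le order_refl add_mono)
    also have "\<dots> \<le> r0 * norm w + r0 * norm v"
      using that by (intro add_mono mult_right_mono) auto
    also have "\<dots> < r0 * (norm v + norm w + 1)"
      using r0 by (simp add: algebra_simps)
    also have "\<dots> = \<delta>" using N by (simp add: r0_def)
    finally have "dist p (p + (r *\<^sub>R w + a *\<^sub>R v)) < \<delta>"
      by (metis add_diff_cancel_left' dist_commute dist_norm)
    then show ?thesis using ball by (auto simp: add.assoc)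
  qed
  ultimately show ?thesis by (rule that)
qed

text \<open>Differentiating \<open>a \<mapsto> \<integral>\<^sub>0\<^sup>b \<partial>\<^sub>w g(p + r w + a v) dr = g(p + b w + a v) - g(p + a v)\<close>
  under the integral sign at \<open>a = 0\<close>.\<close>
lemma integral_dderiv_dderiv_line:
  assumes g: "g \<in> Alg" and r0: "r0 > 0"
    and near: "\<And>a r. \<bar>a\<bar> < r0 \<Longrightarrow> \<bar>r\<bar> \<le> r0 \<Longrightarrow> p + r *\<^sub>R w + a *\<^sub>R v \<in> S"
    and b: "0 \<le> b" "b \<le> r0"
  shows "integral {0..b} (\<lambda>r. dderiv v (dderiv w g) (p + r *\<^sub>R w)) = dderiv v g (p + b *\<^sub>R w) - dderiv v g p"
proof -
  define H where "H a = integral {0..b} (\<lambda>r. dderiv w g (p + r *\<^sub>R w + a *\<^sub>R v))" for a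
  have near_b: "p + r *\<^sub>R w + a *\<^sub>R v \<in> S" if "a \<in> ball 0 r0" "r \<in> cbox 0 b" for a r
    using near that b by (auto simp: cbox_interval)
  have "(H has_real_derivative integral {0..b} (\<lambda>r. dderiv v (dderiv w g) (p + r *\<^sub>R w + 0 *\<^sub>R v)))
      (at 0 within ball 0 r0)"
    unfolding H_def cbox_interval[symmetric]
  proof (rule leibniz_rule_field_derivative)
    show "((\<lambda>a. dderiv w g (p + r *\<^sub>R w + a *\<^sub>R v)) has_real_derivative
        dderiv v (dderiv w g) (p + r *\<^sub>R w + a *\<^sub>R v)) (at a within ball 0 r0)"
      if "a \<in> ball 0 r0" "r \<in> cbox 0 b" for a r
      using near_b[OF that] alg_has_real_derivative_line[of "dderiv w g" "p + r *\<^sub>R w" a v] g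
      by (auto intro: DERIV_subset)
    show "(\<lambda>r. dderiv w g (p + r *\<^sub>R w + a *\<^sub>R v)) integrable_on cbox 0 b" if "a \<in> ball 0 r0" for a
      using g near_b that
      by (intro integrable_continuous continuous_on_compose2[OF alg_continuous_on] continuous_intros) auto
    have "continuous_on (ball 0 r0 \<times> cbox 0 b) (\<lambda>q. dderiv v (dderiv w g) (p + snd q *\<^sub>R w + fst q *\<^sub>R v))"
      using g near_b
      by (intro continuous_on_compose2[OF alg_continuous_on, where f="\<lambda>q. p + snd q *\<^sub>R w + fst q *\<^sub>R v"]
          continuous_intros) auto
    then show "continuous_on (ball 0 r0 \<times> cbox 0 b) (\<lambda>(a, r). dderiv v (dderiv w g) (p + r *\<^sub>R w + a *\<^sub>R v))"
      by (simp add: split_beta)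
  qed (use r0 in auto)
  moreover have "(H has_real_derivative dderiv v g (p + b *\<^sub>R w) - dderiv v g p) (at 0 within ball 0 r0)"
  proof (rule has_field_derivative_transform_within)
    have "((\<lambda>a. g (p + b *\<^sub>R w + a *\<^sub>R v) - g (p + a *\<^sub>R v)) has_real_derivative
        dderiv v g (p + b *\<^sub>R w + 0 *\<^sub>R v) - dderiv v g (p + 0 *\<^sub>R v)) (at 0)"
      using near[of 0 b] near[of 0 0] b r0
      by (intro DERIV_diff alg_has_real_derivative_line[OF g]) auto
    then show "((\<lambda>a. g (p + b *\<^sub>R w + a *\<^sub>R v) - g (p + a *\<^sub>R v)) has_real_derivative
        dderiv v g (p + b *\<^sub>R w) - dderiv v g p) (at 0 within ball 0 r0)"
      by (simp add: has_field_derivative_at_within)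
    show "g (p + b *\<^sub>R w + a *\<^sub>R v) - g (p + a *\<^sub>R v) = H a" if "a \<in> ball 0 r0" for a
    proof -
      have "integral {0..b} (\<lambda>r. dderiv w g ((p + a *\<^sub>R v) + r *\<^sub>R w))
          = g ((p + a *\<^sub>R v) + b *\<^sub>R w) - g (p + a *\<^sub>R v)"
        using near_b[OF that] by (intro integral_dderiv_line[OF g b(1)]) (simp add: add_ac cbox_interval)
      then show ?thesis by (simp add: H_def add_ac)
    qed
  qed (use r0 in auto)
  moreover have "at (0::real) within ball 0 r0 = at 0"
    using r0 by (intro at_within_open) auto
  ultimately show ?thesis
    using DERIV_unique by fastforce
qed

text \<open>Schwarz's theorem: by the fundamental theorem of calculus and the previous lemma, both
  second derivatives have the same integrals along short segments from \<open>p\<close>.\<close>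
lemma dderiv_commute:
  assumes g: "g \<in> Alg" and p: "p \<in> S"
  shows "dderiv w (dderiv v g) p = dderiv v (dderiv w g) p"
proof -
  obtain r0 where r0: "r0 > 0"
    and near: "\<And>a r. \<bar>a\<bar> < r0 \<Longrightarrow> \<bar>r\<bar> \<le> r0 \<Longrightarrow> p + r *\<^sub>R w + a *\<^sub>R v \<in> S"
    using S_contains_small_parallelogram[OF p] by blast
  have line: "p + r *\<^sub>R w \<in> S" if "\<bar>r\<bar> \<le> r0" for r
    using near[of 0 r] r0 that by simp
  define K where "K r = dderiv v (dderiv w g) (p + r *\<^sub>R w) - dderiv w (dderiv v g) (p + r *\<^sub>R w)" for r
  have cont: "continuous_on {0..b} (\<lambda>r. dderiv u (dderiv u' g) (p + r *\<^sub>R w))" if "b \<le> r0" for u u' b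
    using g line that by (intro continuous_on_compose2[OF alg_continuous_on] continuous_intros) auto
  have K_cont: "continuous_on {0..r0} K"
    unfolding K_def using cont by (intro continuous_on_diff) auto
  have K_integral: "integral {0..b} K = 0" if b: "0 \<le> b" "b \<le> r0" for b
    using integral_dderiv_dderiv_line[OF g r0 near b] integral_dderiv_line[OF dderiv_mem[OF g] b(1), of p w] line b
      cont[OF b(2)]
    unfolding K_def by (simp add: integral_diff integrable_continuous_interval)
  have "K 0 = 0"
    by (rule continuous_vanishing_integrals_imp_zero[OF r0 K_cont K_integral])
  then show ?thesis by (simp add: K_def)
qed
end

lemma smooth_gen_Un: "smooth_gen S A \<Longrightarrow> smooth_gen S B \<Longrightarrow> smooth_gen S (A \<union> B)"
  unfolding smooth_gen_def
  by (meson Un_iff gen_alg_mono in_mono sup.cobounded1 sup.cobounded2)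

lemma smooth_on_imp_smooth_gen:
  fixes f :: "'a::real_normed_vector \<Rightarrow> real"
  assumes "smooth_on S f" "open S"
  obtains A where "f \<in> A" "smooth_gen S A"
proof -
  obtain F where F: "f \<in> F" and closed: "\<forall>g\<in>F. continuous_on S g \<and> (\<forall>x\<in>S. g differentiable (at x))
      \<and> (\<forall>v. (\<lambda>x. frechet_derivative g (at x) v) \<in> F)"
    using assms(1) unfolding smooth_on_def by blast
  have "smooth_gen S F"
    using closed assms(2) by unfold_locales (auto simp: dderiv_def[abs_def] intro: gen_alg.gen)
  with F show thesis by (rule that)
qed

lemma smooth_on_imp_smooth_gen_components:
  fixes f :: "'a::real_normed_vector \<Rightarrow> real ^ 'n"
  assumes "smooth_on S f" "open S"
  obtains A where "\<And>j. (\<lambda>p. f p $ j) \<in> A" "smooth_gen S A"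
proof -
  obtain F where F: "f \<in> F" and closed: "\<forall>g\<in>F. continuous_on S g \<and> (\<forall>x\<in>S. g differentiable (at x))
      \<and> (\<forall>v. (\<lambda>x. frechet_derivative g (at x) v) \<in> F)"
    using assms(1) unfolding smooth_on_def by blast
  define A where "A = (\<lambda>(g, j) p. g p $ j) ` (F \<times> UNIV)"
  have component: "((\<lambda>p. g p $ j) has_derivative (\<lambda>v. frechet_derivative g (at p) v $ j)) (at p)"
    if "g \<in> F" "p \<in> S" for g j p
    using closed that bounded_linear.has_derivative[OF bounded_linear_vec_nth frechet_derivative_works[THEN iffD1]]
    by blast
  have "smooth_gen S A"
  proof unfold_locales
    show "h differentiable (at p)" if "h \<in> A" "p \<in> S" for h p
      using that component unfolding A_def differentiable_def by auto
    show "dderiv v h \<in> gen_alg S A" if "h \<in> A" for h v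
    proof -
      obtain g j where g: "g \<in> F" and h: "h = (\<lambda>p. g p $ j)" using \<open>h \<in> A\<close> A_def by auto
      have "(\<lambda>p. frechet_derivative g (at p) v) \<in> F"
        using closed g by blast
      then have "(\<lambda>p. frechet_derivative g (at p) v $ j) \<in> A"
        unfolding A_def by (auto intro!: rev_image_eqI[of "(\<lambda>p. frechet_derivative g (at p) v, j)"])
      moreover have "\<forall>p\<in>S. dderiv v h p = frechet_derivative g (at p) v $ j"
        using component[OF g] h by (auto intro: dderiv_eq)
      ultimately show ?thesis by (blast intro: gen_alg.gen gen_alg.agree_on)
    qed
  qed (rule assms(2))
  moreover have "(\<lambda>p. f p $ j) \<in> A" for j
    using F unfolding A_def by (auto intro!: rev_image_eqI[of "(f, j)"])
  ultimately show thesis using that by blast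
qed

section \<open>Periodic functions on the unit cube\<close>

lemma inner_One_Basis: "i \<in> Basis \<Longrightarrow> One \<bullet> i = (1::real)"
  by (simp add: inner_sum_left inner_Basis)

lemma cbox_0_One_split:
  fixes k :: "'a::euclidean_space"
  assumes "k \<in> Basis" "0 \<le> c" "c \<le> 1"
  shows "cbox 0 One \<inter> {x. x \<bullet> k \<le> c} = cbox 0 (One - (1 - c) *\<^sub>R k)"
    and "cbox 0 One \<inter> {x. x \<bullet> k \<ge> c} = cbox (c *\<^sub>R k) One"
  using assms
  by (force simp: mem_box inner_diff_left inner_One_Basis inner_Basis algebra_simps split: if_splits)+

lemma integral_cbox_0_One_split:
  fixes f :: "'a::euclidean_space \<Rightarrow> real"
  assumes "continuous_on UNIV f" "k \<in> Basis" "0 \<le> c" "c \<le> 1"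
  shows "integral (cbox 0 One) f
    = integral (cbox 0 (One - (1 - c) *\<^sub>R k)) f + integral (cbox (c *\<^sub>R k) One) f"
  using integral_split[OF integrable_continuous[OF continuous_on_subset[OF assms(1)]] assms(2), where c=c]
  by (simp add: cbox_0_One_split[OF assms(2-4)])

lemma integral_cbox_shift:
  fixes f :: "'a::euclidean_space \<Rightarrow> real"
  shows "integral (cbox a b) (\<lambda>x. f (x + c)) = integral (cbox (a + c) (b + c)) f"
  using integral_shift_cbox_plus[of a b f c] by (simp add: o_def add.commute)

text \<open>Cut the cell at \<open>x\<bullet>k = 1 - s\<close>; periodicity moves the upper slab down by \<open>k\<close>, and
  the two translated slabs recombine into the cell cut at \<open>x\<bullet>k = s\<close>.\<close>
lemma integral_cbox_0_One_translate_periodic: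
  fixes h :: "'a::euclidean_space \<Rightarrow> real"
  assumes k: "k \<in> Basis" and per: "\<And>x. h (x + k) = h x" and cont: "continuous_on UNIV h"
    and s: "0 \<le> s" "s \<le> 1"
  shows "integral (cbox 0 One) (\<lambda>x. h (x + s *\<^sub>R k)) = integral (cbox 0 One) h"
proof -
  have shifted: "h (x + s *\<^sub>R k) = h (x + (s - 1) *\<^sub>R k)" for x
    using per[of "x + (s - 1) *\<^sub>R k"] by (simp add: algebra_simps)
  have "integral (cbox 0 One) (\<lambda>x. h (x + s *\<^sub>R k))
      = integral (cbox 0 (One - s *\<^sub>R k)) (\<lambda>x. h (x + s *\<^sub>R k))
        + integral (cbox ((1 - s) *\<^sub>R k) One) (\<lambda>x. h (x + (s - 1) *\<^sub>R k))"
    using integral_cbox_0_One_split[of "\<lambda>x. h (x + s *\<^sub>R k)" k "1 - s"] k s shifted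
    by (simp add: continuous_on_compose2[OF cont] continuous_intros)
  also have "\<dots> = integral (cbox (s *\<^sub>R k) One) h + integral (cbox 0 (One - (1 - s) *\<^sub>R k)) h"
  proof -
    have "(1 - s) *\<^sub>R k + (s - 1) *\<^sub>R k = 0" "One + (s - 1) *\<^sub>R k = One - (1 - s) *\<^sub>R k"
      "One - s *\<^sub>R k + s *\<^sub>R k = One"
      by (simp_all add: algebra_simps)
    then show ?thesis by (simp only: integral_cbox_shift add_0_left)
  qed
  also have "\<dots> = integral (cbox 0 One) h"
    using integral_cbox_0_One_split[OF cont k s] by simp
  finally show ?thesis .
qed

text \<open>The translates \<open>I(s) = \<integral> h(x + s k)\<close> are constant, and differentiating under the
  integral sign gives \<open>I'(0) = \<integral> \<partial>\<^sub>k h\<close>.\<close>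
lemma integral_cbox_0_One_derivative_periodic:
  fixes h :: "'a::euclidean_space \<Rightarrow> real"
  assumes k: "k \<in> Basis" and per: "\<And>x. h (x + k) = h x"
    and deriv: "\<And>x. (h has_derivative h' x) (at x)"
    and cont': "continuous_on UNIV (\<lambda>x. h' x k)"
  shows "integral (cbox 0 One) (\<lambda>x. h' x k) = 0"
proof -
  have cont: "continuous_on UNIV h"
    by (meson continuous_at_imp_continuous_on has_derivative_continuous deriv)
  define I where "I s = integral (cbox 0 One) (\<lambda>x. h (x + s *\<^sub>R k))" for s
  have line: "((\<lambda>s. h (x + s *\<^sub>R k)) has_real_derivative h' (x + s *\<^sub>R k) k) (at s within UNIV)" for x s
  proof -
    have "((\<lambda>s. h (x + s *\<^sub>R k)) has_derivative (\<lambda>d. h' (x + s *\<^sub>R k) (d *\<^sub>R k))) (at s)"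
      using deriv by (rule has_derivative_compose[rotated]) (auto intro!: derivative_eq_intros)
    then show ?thesis
      unfolding has_field_derivative_def
      using linear_scale[OF has_derivative_linear[OF deriv]]
      by (simp add: mult.commute[of _ "h' _ k"] eta_contract_eq)
  qed
  have "(I has_real_derivative integral (cbox 0 One) (\<lambda>x. h' (x + 0 *\<^sub>R k) k)) (at 0 within UNIV)"
    unfolding I_def
  proof (rule leibniz_rule_field_derivative)
    show "(\<lambda>x. h (x + s *\<^sub>R k)) integrable_on cbox 0 One" for s
      by (intro integrable_continuous continuous_on_compose2[OF cont] continuous_intros) auto
    have "continuous_on (UNIV \<times> cbox 0 One) (\<lambda>p. h' (snd p + fst p *\<^sub>R k) k)"
      by (intro continuous_on_compose2[OF cont', where f="\<lambda>p. snd p + fst p *\<^sub>R k"] continuous_intros)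
        auto
    then show "continuous_on (UNIV \<times> cbox 0 One) (\<lambda>(s, x). h' (x + s *\<^sub>R k) k)"
      by (simp add: split_beta)
  qed (use line in auto)
  then have "(I has_vector_derivative integral (cbox 0 One) (\<lambda>x. h' x k)) (at 0 within {0..1})"
    by (auto simp: has_real_derivative_iff_has_vector_derivative[symmetric] intro: DERIV_subset)
  moreover have "(I has_vector_derivative 0) (at 0 within {0..1})"
    by (rule has_vector_derivative_transform_within[where d=1 and f="\<lambda>_. integral (cbox 0 One) h"])
      (auto simp: I_def integral_cbox_0_One_translate_periodic[OF k per cont])
  ultimately show ?thesis
    using vector_derivative_unique_within_closed_interval[of 0 1 0 I] by auto
qed

definition slab :: "(real \<times> sp) set" where
  "slab = {0<..} \<times> UNIV"

lemma open_slab: "open slab"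
  unfolding slab_def by (intro open_Times open_greaterThan open_UNIV)

lemma mem_slab [simp]: "(t, x) \<in> slab \<longleftrightarrow> t > 0"
  by (simp add: slab_def)

abbreviation dx :: "3 \<Rightarrow> (real \<times> sp \<Rightarrow> real) \<Rightarrow> real \<times> sp \<Rightarrow> real" where
  "dx i \<equiv> dderiv (0, axis i 1)"

abbreviation dt :: "(real \<times> sp \<Rightarrow> real) \<Rightarrow> real \<times> sp \<Rightarrow> real" where
  "dt \<equiv> dderiv (1, 0)"

definition lapl_st :: "(real \<times> sp \<Rightarrow> real) \<Rightarrow> real \<times> sp \<Rightarrow> real" where
  "lapl_st g = (\<lambda>p. \<Sum>i\<in>UNIV. dx i (dx i g) p)"

definition periodic_st :: "(real \<times> sp \<Rightarrow> real) \<Rightarrow> bool" where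
  "periodic_st g \<longleftrightarrow> (\<forall>t>0. periodic (\<lambda>x. g (t, x)))"

definition cell_integral :: "real \<Rightarrow> (real \<times> sp \<Rightarrow> real) \<Rightarrow> real" where
  "cell_integral t g = integral Qcube (\<lambda>x. g (t, x))"

lemma periodic_st_const [simp]: "periodic_st (\<lambda>p. c)"
  by (simp add: periodic_st_def periodic_def)

lemma periodic_st_add [simp]: "periodic_st g \<Longrightarrow> periodic_st h \<Longrightarrow> periodic_st (\<lambda>p. g p + h p)"
  by (simp add: periodic_st_def periodic_def)

lemma periodic_st_diff [simp]: "periodic_st g \<Longrightarrow> periodic_st h \<Longrightarrow> periodic_st (\<lambda>p. g p - h p)"
  by (simp add: periodic_st_def periodic_def)

lemma periodic_st_mult [simp]: "periodic_st g \<Longrightarrow> periodic_st h \<Longrightarrow> periodic_st (\<lambda>p. g p * h p)"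
  by (simp add: periodic_st_def periodic_def)

lemma periodic_st_divide [simp]: "periodic_st g \<Longrightarrow> periodic_st (\<lambda>p. g p / c)"
  by (simp add: periodic_st_def periodic_def)

lemma periodic_st_power2 [simp]: "periodic_st g \<Longrightarrow> periodic_st (\<lambda>p. (g p)\<^sup>2)"
  by (simp add: periodic_st_def periodic_def)

lemma periodic_st_sum [simp]:
  "(\<And>i. i \<in> I \<Longrightarrow> periodic_st (f i)) \<Longrightarrow> periodic_st (\<lambda>p. \<Sum>i\<in>I. f i p)"
  by (simp add: periodic_st_def periodic_def)

lemma cell_integral_cmult [simp]: "cell_integral t (\<lambda>p. c * g p) = c * cell_integral t g"
  by (simp add: cell_integral_def)

lemma cell_integral_minus [simp]: "cell_integral t (\<lambda>p. - g p) = - cell_integral t g"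
  by (simp add: cell_integral_def integral_neg)

lemma cell_integral_divide [simp]: "cell_integral t (\<lambda>p. g p / c) = cell_integral t g / c"
  using cell_integral_cmult[of t "inverse c" g] by (simp add: divide_inverse mult.commute)

lemma cell_integral_cong: "(\<And>x. f (t, x) = g (t, x)) \<Longrightarrow> cell_integral t f = cell_integral t g"
  by (simp add: cell_integral_def)

lemma vector_derivative_componentwise:
  fixes f :: "real \<Rightarrow> real ^ 'n"
  assumes "\<And>j. ((\<lambda>s. f s $ j) has_real_derivative f' j) (at t)"
  shows "vector_derivative f (at t) = (\<chi> j. f' j)"
proof (rule vector_derivative_at)
  have "((\<lambda>s. f s \<bullet> b) has_derivative (\<lambda>h. (h *\<^sub>R (\<chi> j. f' j)) \<bullet> b)) (at t)" if "b \<in> Basis" for b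
  proof -
    from \<open>b \<in> Basis\<close> obtain j where b: "b = axis j 1" by (auto simp: Basis_vec_def)
    have "((\<lambda>s. f s $ j) has_derivative (\<lambda>h. h * f' j)) (at t)"
      using assms[of j] by (simp add: has_field_derivative_def mult.commute[of _ "f' j"] eta_contract_eq)
    then show ?thesis by (simp add: b inner_axis)
  qed
  then show "(f has_vector_derivative (\<chi> j. f' j)) (at t)"
    unfolding has_vector_derivative_def by (subst has_derivative_componentwise_within) blast
qed

lemma power2_norm_vec: "(norm (v :: real ^ 'n))\<^sup>2 = (\<Sum>j\<in>UNIV. (v $ j)\<^sup>2)"
  by (simp add: norm_vec_def L2_set_def sum_nonneg)

locale smooth_st = smooth_gen slab A for A
begin

lemma lapl_st_mem [simp]: "g \<in> Alg \<Longrightarrow> lapl_st g \<in> Alg"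
  unfolding lapl_st_def by simp

lemma dderiv_lapl_st:
  assumes g: "g \<in> Alg" and p: "p \<in> slab"
  shows "dderiv v (lapl_st g) p = lapl_st (dderiv v g) p"
proof -
  have "dderiv v (dx i (dx i g)) p = dx i (dderiv v (dx i g)) p" for i
    using g p by (simp add: dderiv_commute)
  also have "dx i (dderiv v (dx i g)) p = dx i (dx i (dderiv v g)) p" for i
    using g p dderiv_commute by (intro dderiv_cong_open[OF open_S]) auto
  finally show ?thesis
    using g p by (simp add: lapl_st_def)
qed

lemma has_derivative_slice:
  assumes "g \<in> Alg" "t > 0"
  shows "((\<lambda>x. g (t, x)) has_derivative (\<lambda>h. dderiv (0, h) g (t, x))) (at x)"
proof -
  have "((\<lambda>x. (t, x)) has_derivative (\<lambda>h. (0, h))) (at x)"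
    by (auto intro!: derivative_eq_intros)
  from has_derivative_compose[OF this alg_has_derivative[OF assms(1)]] show ?thesis
    using assms(2) by (simp add: o_def)
qed

lemma pd_slice: "g \<in> Alg \<Longrightarrow> t > 0 \<Longrightarrow> pd i (\<lambda>x. g (t, x)) = (\<lambda>x. dx i g (t, x))"
  using frechet_derivative_at[OF has_derivative_slice] by (auto simp: pd_def fun_eq_iff)

lemma grad_slice: "g \<in> Alg \<Longrightarrow> t > 0 \<Longrightarrow> grad (\<lambda>x. g (t, x)) x = (\<chi> i. dx i g (t, x))"
  by (simp add: grad_def pd_slice)

lemma lapl_slice: "g \<in> Alg \<Longrightarrow> t > 0 \<Longrightarrow> lapl (\<lambda>x. g (t, x)) x = lapl_st g (t, x)"
  by (simp add: lapl_def lapl_st_def pd_slice)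

lemma has_real_derivative_time:
  assumes "g \<in> Alg" "t > 0"
  shows "((\<lambda>s. g (s, x)) has_real_derivative dt g (t, x)) (at t)"
  using alg_has_real_derivative_line[OF assms(1), of "(0, x)" t "(1, 0)"] assms(2) by simp

lemma continuous_on_slice: "g \<in> Alg \<Longrightarrow> t > 0 \<Longrightarrow> continuous_on T (\<lambda>x. g (t, x))"
  by (intro continuous_on_compose2[OF alg_continuous_on] continuous_intros) auto

lemma integrable_on_slice: "g \<in> Alg \<Longrightarrow> t > 0 \<Longrightarrow> (\<lambda>x. g (t, x)) integrable_on Qcube"
  unfolding Qcube_def by (intro integrable_continuous continuous_on_slice)

lemma cell_integral_add [simp]:
  "g \<in> Alg \<Longrightarrow> h \<in> Alg \<Longrightarrow> t > 0 \<Longrightarrow>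
    cell_integral t (\<lambda>p. g p + h p) = cell_integral t g + cell_integral t h"
  unfolding cell_integral_def by (intro integral_add integrable_on_slice)

lemma cell_integral_diff [simp]:
  "g \<in> Alg \<Longrightarrow> h \<in> Alg \<Longrightarrow> t > 0 \<Longrightarrow>
    cell_integral t (\<lambda>p. g p - h p) = cell_integral t g - cell_integral t h"
  unfolding cell_integral_def by (intro integral_diff integrable_on_slice)

lemma cell_integral_sum [simp]:
  "(\<And>i. i \<in> I \<Longrightarrow> f i \<in> Alg) \<Longrightarrow> t > 0 \<Longrightarrow>
    cell_integral t (\<lambda>p. \<Sum>i\<in>I. f i p) = (\<Sum>i\<in>I. cell_integral t (f i))"
  by (cases "finite I") (auto simp: cell_integral_def intro!: integral_sum integrable_on_slice)

lemma cell_integral_has_real_derivative: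
  assumes g: "g \<in> Alg" and t: "t > 0"
  shows "((\<lambda>s. cell_integral s g) has_real_derivative cell_integral t (dt g)) (at t)"
proof -
  have "((\<lambda>s. integral (cbox 0 One) (\<lambda>x. g (s, x))) has_real_derivative
      integral (cbox 0 One) (\<lambda>x. dt g (t, x))) (at t within {0<..})"
  proof (rule leibniz_rule_field_derivative)
    show "((\<lambda>s. g (s, x)) has_real_derivative dt g (s, x)) (at s within {0<..})"
      if "s \<in> {0<..}" for s x
      using has_real_derivative_time[OF g] that by (auto intro: DERIV_subset)
    show "(\<lambda>x. g (s, x)) integrable_on cbox 0 One" if "s \<in> {0<..}" for s
      using g that by (intro integrable_continuous continuous_on_slice) auto
    have "continuous_on ({0<..} \<times> cbox 0 One) (dt g)"
      by (rule continuous_on_subset[OF alg_continuous_on[OF dderiv_mem[OF g]]]) (auto simp: slab_def)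
    then show "continuous_on ({0<..} \<times> cbox 0 One) (\<lambda>(s, x). dt g (s, x))"
      by (simp add: case_prod_eta)
  qed (use t in auto)
  then show ?thesis
    using t at_within_open[of t "{0<..}"] by (simp add: cell_integral_def Qcube_def)
qed

lemma periodic_st_dderiv:
  assumes g: "g \<in> Alg" and per: "periodic_st g"
  shows "periodic_st (dderiv v g)"
  unfolding periodic_st_def periodic_def
proof (intro allI impI)
  fix t :: real and x i assume t: "t > 0"
  define c :: "real \<times> sp" where "c = (0, axis i 1)"
  have "((\<lambda>p. p + c) has_derivative (\<lambda>v. v)) (at (t, x))"
    by (auto intro!: derivative_eq_intros)
  from has_derivative_compose[OF this alg_has_derivative[OF g]]
  have "((\<lambda>p. g (p + c)) has_derivative (\<lambda>v. dderiv v g ((t, x) + c))) (at (t, x))"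
    using t by (simp add: c_def o_def)
  then have "dderiv v g ((t, x) + c) = dderiv v (\<lambda>p. g (p + c)) (t, x)"
    by (simp add: dderiv_eq)
  also have "\<dots> = dderiv v g (t, x)"
    using per t by (intro dderiv_cong_open[OF open_S]) (auto simp: slab_def c_def periodic_st_def periodic_def)
  finally show "dderiv v g (t, x + axis i 1) = dderiv v g (t, x)"
    by (simp add: c_def)
qed

lemma periodic_st_lapl_st [simp]: "g \<in> Alg \<Longrightarrow> periodic_st g \<Longrightarrow> periodic_st (lapl_st g)"
  unfolding lapl_st_def by (simp add: periodic_st_dderiv)

lemma cell_integral_dx_periodic:
  assumes g: "g \<in> Alg" "periodic_st g" and t: "t > 0"
  shows "cell_integral t (dx i g) = 0"
proof -
  have "axis i (1::real) \<in> Basis" by simp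
  then show ?thesis
    unfolding cell_integral_def Qcube_def
    using integral_cbox_0_One_derivative_periodic[of "axis i 1" "\<lambda>x. g (t, x)" "\<lambda>x h. dderiv (0, h) g (t, x)"]
      g t has_derivative_slice continuous_on_slice
    by (simp add: periodic_st_def periodic_def)
qed

lemma cell_integral_eq_mod_divergence:
  assumes "f \<in> Alg" "g \<in> Alg" "\<And>i. H i \<in> Alg" "\<And>i. periodic_st (H i)" "t > 0"
    and "\<And>x. f (t, x) = g (t, x) + (\<Sum>i\<in>UNIV. dx i (H i) (t, x))"
  shows "cell_integral t f = cell_integral t g"
proof -
  have "cell_integral t f = cell_integral t (\<lambda>p. g p + (\<Sum>i\<in>UNIV. dx i (H i) p))"
    using assms(6) by (simp add: cell_integral_def)
  also have "\<dots> = cell_integral t g"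
    using assms(2-5) by (simp add: cell_integral_dx_periodic)
  finally show ?thesis .
qed

lemma cell_integral_mult_lapl_st:
  assumes "f \<in> Alg" "g \<in> Alg" "periodic_st f" "periodic_st g" "t > 0"
  shows "cell_integral t (\<lambda>p. f p * lapl_st g p) = - cell_integral t (\<lambda>p. \<Sum>i\<in>UNIV. dx i f p * dx i g p)"
proof -
  have "cell_integral t (\<lambda>p. f p * lapl_st g p)
      = cell_integral t (\<lambda>p. - (\<Sum>i\<in>UNIV. dx i f p * dx i g p))"
    using assms
    by (intro cell_integral_eq_mod_divergence[where H="\<lambda>i p. f p * dx i g p"])
       (auto simp: periodic_st_dderiv lapl_st_def sum_distrib_left sum_negf[symmetric]
          sum.distrib[symmetric] simp del: sum_negf)
  then show ?thesis
    using assms by (simp add: cell_integral_def integral_neg)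
qed

lemma cell_integral_lapl_st_symmetric:
  assumes "f \<in> Alg" "g \<in> Alg" "periodic_st f" "periodic_st g" "t > 0"
  shows "cell_integral t (\<lambda>p. f p * lapl_st g p) = cell_integral t (\<lambda>p. g p * lapl_st f p)"
  using cell_integral_mult_lapl_st[OF assms] cell_integral_mult_lapl_st[OF assms(2,1,4,3,5)]
  by (simp add: mult.commute)

lemma cell_integral_transport_solenoidal:
  assumes "\<And>i. U i \<in> Alg" "\<And>i. periodic_st (U i)" "g \<in> Alg" "periodic_st g" "t > 0"
    and div: "\<And>x. (\<Sum>i\<in>UNIV. dx i (U i) (t, x)) = 0"
  shows "cell_integral t (\<lambda>p. \<Sum>i\<in>UNIV. U i p * dx i g p) = 0"
proof -
  have "cell_integral t (\<lambda>p. \<Sum>i\<in>UNIV. U i p * dx i g p) = cell_integral t (\<lambda>p. 0)"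
  proof (rule cell_integral_eq_mod_divergence[where H="\<lambda>i p. U i p * g p"])
    fix x
    have product_rule: "(\<Sum>i\<in>UNIV. dx i (\<lambda>p. U i p * g p) (t, x))
        = (\<Sum>i\<in>UNIV. U i (t, x) * dx i g (t, x)) + (\<Sum>i\<in>UNIV. dx i (U i) (t, x)) * g (t, x)"
      using assms(1,3,5) by (simp add: sum.distrib sum_distrib_right)
    then show "(\<Sum>i\<in>UNIV. U i (t, x) * dx i g (t, x)) = 0 + (\<Sum>i\<in>UNIV. dx i (\<lambda>p. U i p * g p) (t, x))"
      by (simp only: product_rule div mult_zero_left add_0_left add_0_right)
  qed (use assms(1-5) in simp_all)
  then show ?thesis by (simp add: cell_integral_def)
qed

end

section \<open>Energy identities\<close>

definition fop_st :: "real \<Rightarrow> (real \<times> sp \<Rightarrow> real) \<Rightarrow> real \<times> sp \<Rightarrow> real" where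
  "fop_st \<epsilon> \<Phi> = (\<lambda>p. - \<epsilon> * lapl_st \<Phi> p + (1/\<epsilon>) * ((\<Phi> p)\<^sup>2 - 1) * \<Phi> p)"

definition gop_st :: "real \<Rightarrow> (real \<times> sp \<Rightarrow> real) \<Rightarrow> real \<times> sp \<Rightarrow> real" where
  "gop_st \<epsilon> \<Phi> = (\<lambda>p. - lapl_st (fop_st \<epsilon> \<Phi>) p + (1/\<epsilon>\<^sup>2) * (3 * (\<Phi> p)\<^sup>2 - 1) * fop_st \<epsilon> \<Phi> p)"

definition Bdens_st :: "real \<Rightarrow> (real \<times> sp \<Rightarrow> real) \<Rightarrow> real \<times> sp \<Rightarrow> real" where
  "Bdens_st \<epsilon> \<Phi> = (\<lambda>p. \<epsilon>/2 * (\<Sum>i\<in>UNIV. (dx i \<Phi> p)\<^sup>2) + 1/(4*\<epsilon>) * ((\<Phi> p)\<^sup>2 - 1)\<^sup>2)"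

text \<open>The constraint terms are evaluated at the fixed time \<open>t\<close>, which keeps the variational
  derivative inside the algebra of smooth space-time functions.\<close>
definition dEop_st :: "real \<Rightarrow> real \<Rightarrow> real \<Rightarrow> real \<Rightarrow> real \<Rightarrow> real \<Rightarrow> (real \<times> sp \<Rightarrow> real) \<Rightarrow> real
    \<Rightarrow> real \<times> sp \<Rightarrow> real" where
  "dEop_st k \<epsilon> M1 M2 \<alpha> \<beta> \<Phi> t = (\<lambda>p. k * gop_st \<epsilon> \<Phi> p + M1 * (cell_integral t \<Phi> - \<alpha>)
     + M2 * (cell_integral t (Bdens_st \<epsilon> \<Phi>) - \<beta>) * fop_st \<epsilon> \<Phi> p)"

context smooth_st
begin

lemma fop_st_mem [simp]: "\<Phi> \<in> Alg \<Longrightarrow> fop_st \<epsilon> \<Phi> \<in> Alg"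
  by (simp add: fop_st_def)

lemma gop_st_mem [simp]: "\<Phi> \<in> Alg \<Longrightarrow> gop_st \<epsilon> \<Phi> \<in> Alg"
  by (simp add: gop_st_def)

lemma Bdens_st_mem [simp]: "\<Phi> \<in> Alg \<Longrightarrow> Bdens_st \<epsilon> \<Phi> \<in> Alg"
  by (simp add: Bdens_st_def)

lemma dEop_st_mem [simp]: "\<Phi> \<in> Alg \<Longrightarrow> dEop_st k \<epsilon> M1 M2 \<alpha> \<beta> \<Phi> t \<in> Alg"
  by (simp add: dEop_st_def)

lemma periodic_st_fop_st [simp]: "\<Phi> \<in> Alg \<Longrightarrow> periodic_st \<Phi> \<Longrightarrow> periodic_st (fop_st \<epsilon> \<Phi>)"
  by (simp add: fop_st_def)

lemma dderiv_fop_st: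
  "\<Phi> \<in> Alg \<Longrightarrow> p \<in> slab \<Longrightarrow>
    dderiv v (fop_st \<epsilon> \<Phi>) p = - \<epsilon> * lapl_st (dderiv v \<Phi>) p + 1/\<epsilon> * (3 * (\<Phi> p)\<^sup>2 - 1) * dderiv v \<Phi> p"
  by (simp add: fop_st_def dderiv_lapl_st algebra_simps power2_eq_square)

lemma cell_integral_dt_fop_st_sq:
  assumes \<Phi>: "\<Phi> \<in> Alg" "periodic_st \<Phi>" and t: "t > 0" and \<epsilon>: "\<epsilon> \<noteq> 0"
  shows "cell_integral t (dt (\<lambda>p. (fop_st \<epsilon> \<Phi> p)\<^sup>2))
    = 2 * \<epsilon> * cell_integral t (\<lambda>p. gop_st \<epsilon> \<Phi> p * dt \<Phi> p)"
proof -
  let ?F = "fop_st \<epsilon> \<Phi>" and ?W = "\<lambda>p. (3 * (\<Phi> p)\<^sup>2 - 1) * fop_st \<epsilon> \<Phi> p * dt \<Phi> p"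
  have "cell_integral t (dt (\<lambda>p. (?F p)\<^sup>2))
      = cell_integral t (\<lambda>p. (- 2 * \<epsilon>) * (?F p * lapl_st (dt \<Phi>) p) + (2 / \<epsilon>) * ?W p)"
    using \<Phi> t by (intro cell_integral_cong) (simp add: dderiv_fop_st algebra_simps)
  also have "\<dots> = (- 2 * \<epsilon>) * cell_integral t (\<lambda>p. dt \<Phi> p * lapl_st ?F p) + (2 / \<epsilon>) * cell_integral t ?W"
    using \<Phi> t by (simp add: cell_integral_lapl_st_symmetric periodic_st_dderiv)
  also have "\<dots> = 2 * \<epsilon> * cell_integral t (\<lambda>p. (- 1) * (dt \<Phi> p * lapl_st ?F p) + (1 / \<epsilon>\<^sup>2) * ?W p)"
    using \<Phi> t \<epsilon> by (simp add: algebra_simps power2_eq_square)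
  also have "\<dots> = 2 * \<epsilon> * cell_integral t (\<lambda>p. gop_st \<epsilon> \<Phi> p * dt \<Phi> p)"
    by (intro arg_cong[where f="\<lambda>I. 2 * \<epsilon> * I"] cell_integral_cong) (simp add: gop_st_def algebra_simps)
  finally show ?thesis .
qed

lemma cell_integral_dt_Bdens_st:
  assumes \<Phi>: "\<Phi> \<in> Alg" "periodic_st \<Phi>" and t: "t > 0" and \<epsilon>: "\<epsilon> \<noteq> 0"
  shows "cell_integral t (dt (Bdens_st \<epsilon> \<Phi>)) = cell_integral t (\<lambda>p. fop_st \<epsilon> \<Phi> p * dt \<Phi> p)"
proof -
  let ?W = "\<lambda>p. ((\<Phi> p)\<^sup>2 - 1) * \<Phi> p * dt \<Phi> p"
  have "cell_integral t (dt (Bdens_st \<epsilon> \<Phi>))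
      = cell_integral t (\<lambda>p. \<epsilon> * (\<Sum>i\<in>UNIV. dx i (dt \<Phi>) p * dx i \<Phi> p) + (1 / \<epsilon>) * ?W p)"
    using \<Phi> t \<epsilon>
    by (intro cell_integral_cong)
       (simp add: Bdens_st_def dderiv_commute[of \<Phi>] sum_distrib_left algebra_simps power2_eq_square)
  also have "\<dots> = - \<epsilon> * cell_integral t (\<lambda>p. dt \<Phi> p * lapl_st \<Phi> p) + (1 / \<epsilon>) * cell_integral t ?W"
    using \<Phi> t by (simp add: cell_integral_mult_lapl_st periodic_st_dderiv del: cell_integral_sum)
  also have "\<dots> = cell_integral t (\<lambda>p. fop_st \<epsilon> \<Phi> p * dt \<Phi> p)"
    using \<Phi> t by (simp add: fop_st_def algebra_simps)
  finally show ?thesis .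
qed

lemma free_energy_rate:
  assumes \<Phi>: "\<Phi> \<in> Alg" "periodic_st \<Phi>" and t: "t > 0" and \<epsilon>: "\<epsilon> \<noteq> 0"
  shows "((\<lambda>s. k/(2*\<epsilon>) * cell_integral s (\<lambda>p. (fop_st \<epsilon> \<Phi> p)\<^sup>2)
      + 1/2 * M1 * (cell_integral s \<Phi> - \<alpha>)\<^sup>2 + 1/2 * M2 * (cell_integral s (Bdens_st \<epsilon> \<Phi>) - \<beta>)\<^sup>2)
    has_real_derivative cell_integral t (\<lambda>p. dEop_st k \<epsilon> M1 M2 \<alpha> \<beta> \<Phi> t p * dt \<Phi> p)) (at t)"
proof -
  let ?F = "fop_st \<epsilon> \<Phi>" and ?B = "Bdens_st \<epsilon> \<Phi>"
  define c1 where "c1 = M1 * (cell_integral t \<Phi> - \<alpha>)"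
  define c2 where "c2 = M2 * (cell_integral t ?B - \<beta>)"
  have "k/(2*\<epsilon>) * cell_integral t (dt (\<lambda>p. (?F p)\<^sup>2))
      + 1/2 * M1 * (2 * (cell_integral t \<Phi> - \<alpha>) * cell_integral t (dt \<Phi>))
      + 1/2 * M2 * (2 * (cell_integral t ?B - \<beta>) * cell_integral t (dt ?B))
      = k * cell_integral t (\<lambda>p. gop_st \<epsilon> \<Phi> p * dt \<Phi> p) + c1 * cell_integral t (dt \<Phi>)
        + c2 * cell_integral t (\<lambda>p. ?F p * dt \<Phi> p)"
    using \<epsilon> by (simp add: cell_integral_dt_fop_st_sq[OF \<Phi> t \<epsilon>] cell_integral_dt_Bdens_st[OF \<Phi> t \<epsilon>] c1_def c2_def
        algebra_simps)
  also have "\<dots> = cell_integral t (\<lambda>p. k * (gop_st \<epsilon> \<Phi> p * dt \<Phi> p) + c1 * dt \<Phi> p + c2 * (?F p * dt \<Phi> p))"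
    using \<Phi> t by simp
  also have "\<dots> = cell_integral t (\<lambda>p. dEop_st k \<epsilon> M1 M2 \<alpha> \<beta> \<Phi> t p * dt \<Phi> p)"
    by (intro cell_integral_cong) (simp add: dEop_st_def c1_def c2_def algebra_simps)
  finally have rate: "k/(2*\<epsilon>) * cell_integral t (dt (\<lambda>p. (?F p)\<^sup>2))
      + 1/2 * M1 * (2 * (cell_integral t \<Phi> - \<alpha>) * cell_integral t (dt \<Phi>))
      + 1/2 * M2 * (2 * (cell_integral t ?B - \<beta>) * cell_integral t (dt ?B))
      = cell_integral t (\<lambda>p. dEop_st k \<epsilon> M1 M2 \<alpha> \<beta> \<Phi> t p * dt \<Phi> p)" .
  have square: "((\<lambda>s. (f s - a)\<^sup>2) has_real_derivative 2 * (f t - a) * D) (at t)"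
    if "(f has_real_derivative D) (at t)" for f :: "real \<Rightarrow> real" and D a
    using that by (auto intro!: derivative_eq_intros)
  show ?thesis
    unfolding rate[symmetric] using \<Phi> t
    by (intro DERIV_add DERIV_cmult square cell_integral_has_real_derivative) simp_all
qed

lemma kinetic_energy_rate:
  assumes U: "\<And>j. U j \<in> Alg" "\<And>j. periodic_st (U j)" and P: "P \<in> Alg" "periodic_st P"
    and F: "\<And>j. F j \<in> Alg" and t: "t > 0"
    and div: "\<And>x. (\<Sum>i\<in>UNIV. dx i (U i) (t, x)) = 0"
    and NS: "\<And>j x. dt (U j) (t, x) + (\<Sum>i\<in>UNIV. U i (t, x) * dx i (U j) (t, x)) + dx j P (t, x)
      = \<mu> * lapl_st (U j) (t, x) + F j (t, x)"
  shows "((\<lambda>s. 1/2 * cell_integral s (\<lambda>p. \<Sum>j\<in>UNIV. (U j p)\<^sup>2)) has_real_derivative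
      cell_integral t (\<lambda>p. \<Sum>j\<in>UNIV. U j p * F j p)
      - \<mu> * cell_integral t (\<lambda>p. \<Sum>j\<in>UNIV. \<Sum>i\<in>UNIV. (dx i (U j) p)\<^sup>2)) (at t)"
proof -
  define E where "E p = (\<Sum>j\<in>UNIV. (U j p)\<^sup>2)" for p
  have E: "E \<in> Alg" "periodic_st E"
    using U by (simp_all add: E_def[abs_def])
  have "dt E (t, x) = 2 * (\<mu> * (\<Sum>j\<in>UNIV. U j (t, x) * lapl_st (U j) (t, x))
      + (\<Sum>j\<in>UNIV. U j (t, x) * F j (t, x)) - (\<Sum>i\<in>UNIV. U i (t, x) * dx i P (t, x)))
      - (\<Sum>i\<in>UNIV. U i (t, x) * dx i E (t, x))" for x
  proof -
    have dE: "dderiv v E (t, x) = 2 * (\<Sum>j\<in>UNIV. U j (t, x) * dderiv v (U j) (t, x))" for v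
      using U t by (simp add: E_def[abs_def] sum_distrib_left mult.assoc)
    have NS': "dt (U j) (t, x) = \<mu> * lapl_st (U j) (t, x) + F j (t, x)
        - (\<Sum>i\<in>UNIV. U i (t, x) * dx i (U j) (t, x)) - dx j P (t, x)" for j
      using NS[of j x] by linarith
    have "(\<Sum>i\<in>UNIV. U i (t, x) * dx i E (t, x))
        = 2 * (\<Sum>j\<in>UNIV. U j (t, x) * (\<Sum>i\<in>UNIV. U i (t, x) * dx i (U j) (t, x)))"
      unfolding dE sum_distrib_left by (subst sum.swap) (simp add: mult.left_commute)
    then show ?thesis
      unfolding dE NS' by (simp add: algebra_simps sum.distrib sum_subtractf sum_distrib_left)
  qed
  then have "cell_integral t (dt E) = cell_integral t (\<lambda>p. 2 * (\<mu> * (\<Sum>j\<in>UNIV. U j p * lapl_st (U j) p)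
      + (\<Sum>j\<in>UNIV. U j p * F j p) - (\<Sum>i\<in>UNIV. U i p * dx i P p))
      - (\<Sum>i\<in>UNIV. U i p * dx i E p))"
    by (rule cell_integral_cong)
  moreover have "cell_integral t (\<lambda>p. \<Sum>j\<in>UNIV. U j p * lapl_st (U j) p)
      = - cell_integral t (\<lambda>p. \<Sum>j\<in>UNIV. \<Sum>i\<in>UNIV. (dx i (U j) p)\<^sup>2)"
    using U t by (simp add: cell_integral_mult_lapl_st power2_eq_square sum_negf)
  moreover have "cell_integral t (\<lambda>p. \<Sum>i\<in>UNIV. U i p * dx i g p) = 0"
    if "g \<in> Alg" "periodic_st g" for g
    using U that t div by (rule cell_integral_transport_solenoidal)
  ultimately have rate: "1/2 * cell_integral t (dt E) = cell_integral t (\<lambda>p. \<Sum>j\<in>UNIV. U j p * F j p)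
      - \<mu> * cell_integral t (\<lambda>p. \<Sum>j\<in>UNIV. \<Sum>i\<in>UNIV. (dx i (U j) p)\<^sup>2)"
    using U F P E t by (simp del: cell_integral_sum)
  have "((\<lambda>s. 1/2 * cell_integral s E) has_real_derivative
      cell_integral t (\<lambda>p. \<Sum>j\<in>UNIV. U j p * F j p)
      - \<mu> * cell_integral t (\<lambda>p. \<Sum>j\<in>UNIV. \<Sum>i\<in>UNIV. (dx i (U j) p)\<^sup>2)) (at t)"
    using DERIV_cmult[OF cell_integral_has_real_derivative[OF E(1) t], of "1/2"] unfolding rate .
  then show ?thesis
    by (simp only: E_def[abs_def])
qed

lemma energy_dissipation_st:
  assumes U: "\<And>j. U j \<in> Alg" "\<And>j. periodic_st (U j)" and P: "P \<in> Alg" "periodic_st P"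
    and \<Phi>: "\<Phi> \<in> Alg" "periodic_st \<Phi>" and t: "t > 0" and \<epsilon>: "\<epsilon> \<noteq> 0"
    and div: "\<And>x. (\<Sum>i\<in>UNIV. dx i (U i) (t, x)) = 0"
    and NS: "\<And>j x. dt (U j) (t, x) + (\<Sum>i\<in>UNIV. U i (t, x) * dx i (U j) (t, x)) + dx j P (t, x)
      = \<mu> * lapl_st (U j) (t, x) + dEop_st k \<epsilon> M1 M2 \<alpha> \<beta> \<Phi> t (t, x) * dx j \<Phi> (t, x)"
    and PF: "\<And>x. dt \<Phi> (t, x) + (\<Sum>i\<in>UNIV. U i (t, x) * dx i \<Phi> (t, x))
      = - \<gamma> * dEop_st k \<epsilon> M1 M2 \<alpha> \<beta> \<Phi> t (t, x)"
  shows "((\<lambda>s. 1/2 * cell_integral s (\<lambda>p. \<Sum>j\<in>UNIV. (U j p)\<^sup>2)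
      + (k/(2*\<epsilon>) * cell_integral s (\<lambda>p. (fop_st \<epsilon> \<Phi> p)\<^sup>2)
      + 1/2 * M1 * (cell_integral s \<Phi> - \<alpha>)\<^sup>2 + 1/2 * M2 * (cell_integral s (Bdens_st \<epsilon> \<Phi>) - \<beta>)\<^sup>2))
    has_real_derivative - (\<mu> * cell_integral t (\<lambda>p. \<Sum>j\<in>UNIV. \<Sum>i\<in>UNIV. (dx i (U j) p)\<^sup>2)
      + \<gamma> * cell_integral t (\<lambda>p. (dEop_st k \<epsilon> M1 M2 \<alpha> \<beta> \<Phi> t p)\<^sup>2))) (at t)"
proof -
  define W where "W = dEop_st k \<epsilon> M1 M2 \<alpha> \<beta> \<Phi> t"
  have W: "W \<in> Alg" using \<Phi> by (simp add: W_def)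
  let ?T = "\<lambda>p. W p * (\<Sum>i\<in>UNIV. U i p * dx i \<Phi> p)"
  have transport: "cell_integral t (\<lambda>p. \<Sum>j\<in>UNIV. U j p * (W p * dx j \<Phi> p)) = cell_integral t ?T"
    by (intro cell_integral_cong) (simp add: sum_distrib_left mult.left_commute)
  have "cell_integral t (\<lambda>p. W p * dt \<Phi> p) = cell_integral t (\<lambda>p. - \<gamma> * (W p)\<^sup>2 - ?T p)"
  proof (intro cell_integral_cong)
    fix x
    have "dt \<Phi> (t, x) = - \<gamma> * W (t, x) - (\<Sum>i\<in>UNIV. U i (t, x) * dx i \<Phi> (t, x))"
      using PF[of x] unfolding W_def by linarith
    then show "W (t, x) * dt \<Phi> (t, x) = - \<gamma> * (W (t, x))\<^sup>2 - ?T (t, x)"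
      by (simp add: power2_eq_square right_diff_distrib)
  qed
  then have phase: "cell_integral t (\<lambda>p. W p * dt \<Phi> p)
      = - \<gamma> * cell_integral t (\<lambda>p. (W p)\<^sup>2) - cell_integral t ?T"
    using U W \<Phi> t by simp
  have "(\<lambda>p. W p * dx j \<Phi> p) \<in> Alg" for j using W \<Phi> by simp
  from DERIV_add[OF kinetic_energy_rate[where F="\<lambda>j p. W p * dx j \<Phi> p", OF U P this t div NS[folded W_def]]
      free_energy_rate[OF \<Phi> t \<epsilon>, of k M1 \<alpha> M2 \<beta>, folded W_def]]
  show ?thesis
    unfolding W_def[symmetric] by (rule DERIV_cong) (use transport phase in linarith)
qed

end

context smooth_st
begin

lemma fop_slice: "\<Phi> \<in> Alg \<Longrightarrow> t > 0 \<Longrightarrow> fop \<epsilon> (\<lambda>x. \<Phi> (t, x)) = (\<lambda>x. fop_st \<epsilon> \<Phi> (t, x))"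
  by (simp add: fun_eq_iff fop_def fop_st_def lapl_slice)

lemma gop_slice: "\<Phi> \<in> Alg \<Longrightarrow> t > 0 \<Longrightarrow> gop \<epsilon> (\<lambda>x. \<Phi> (t, x)) x = gop_st \<epsilon> \<Phi> (t, x)"
  by (simp add: gop_def gop_st_def fop_slice lapl_slice)

lemma Aop_slice: "Aop (\<lambda>x. \<Phi> (t, x)) = cell_integral t \<Phi>"
  by (simp add: Aop_def cell_integral_def)

lemma Bop_slice: "\<Phi> \<in> Alg \<Longrightarrow> t > 0 \<Longrightarrow> Bop \<epsilon> (\<lambda>x. \<Phi> (t, x)) = cell_integral t (Bdens_st \<epsilon> \<Phi>)"
  by (simp add: Bop_def Bdens_st_def cell_integral_def grad_slice power2_norm_vec)

lemma dEop_slice: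
  "\<Phi> \<in> Alg \<Longrightarrow> t > 0 \<Longrightarrow>
    dEop k \<epsilon> M1 M2 \<alpha> \<beta> (\<lambda>x. \<Phi> (t, x)) x = dEop_st k \<epsilon> M1 M2 \<alpha> \<beta> \<Phi> t (t, x)"
  by (simp add: dEop_def dEop_st_def gop_slice Aop_slice Bop_slice fop_slice)

lemma Eop_slice:
  "\<Phi> \<in> Alg \<Longrightarrow> t > 0 \<Longrightarrow> Eop k \<epsilon> M1 M2 \<alpha> \<beta> (\<lambda>x. \<Phi> (t, x))
    = k/(2*\<epsilon>) * cell_integral t (\<lambda>p. (fop_st \<epsilon> \<Phi> p)\<^sup>2)
      + 1/2 * M1 * (cell_integral t \<Phi> - \<alpha>)\<^sup>2 + 1/2 * M2 * (cell_integral t (Bdens_st \<epsilon> \<Phi>) - \<beta>)\<^sup>2"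
  by (simp add: Eop_def fop_slice Aop_slice Bop_slice cell_integral_def)

lemma momentum_equation_slab:
  fixes u :: "real \<Rightarrow> sp \<Rightarrow> real ^ 3" and P :: "real \<Rightarrow> sp \<Rightarrow> real"
  assumes U: "\<And>j. (\<lambda>(s, x). u s x $ j) \<in> Alg" and P: "(\<lambda>(s, x). P s x) \<in> Alg" and t: "t > 0"
    and NS: "vector_derivative (\<lambda>s. u s x) (at t) + advect (u t) (u t) x + grad (P t) x
      = \<mu> *\<^sub>R vlapl (u t) x + f"
  shows "dt (\<lambda>(s, x). u s x $ j) (t, x) + (\<Sum>i\<in>UNIV. u t x $ i * dx i (\<lambda>(s, x). u s x $ j) (t, x))
      + dx j (\<lambda>(s, x). P s x) (t, x) = \<mu> * lapl_st (\<lambda>(s, x). u s x $ j) (t, x) + f $ j"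
proof -
  have "vector_derivative (\<lambda>s. u s x) (at t) = (\<chi> j. dt (\<lambda>(s, x). u s x $ j) (t, x))"
    using has_real_derivative_time[OF U t] by (intro vector_derivative_componentwise) simp
  moreover have "advect (u t) (u t) x $ j = (\<Sum>i\<in>UNIV. u t x $ i * dx i (\<lambda>(s, x). u s x $ j) (t, x))"
    using pd_slice[OF U t] by (simp add: advect_def)
  moreover have "grad (P t) x $ j = dx j (\<lambda>(s, x). P s x) (t, x)"
    using grad_slice[OF P t] by simp
  moreover have "vlapl (u t) x $ j = lapl_st (\<lambda>(s, x). u s x $ j) (t, x)"
    using lapl_slice[OF U t] by (simp add: vlapl_def)
  ultimately show ?thesis
    using arg_cong[where f="\<lambda>v. v $ j", OF NS] by simp
qed

lemma energy_dissipation: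
  fixes u :: "real \<Rightarrow> sp \<Rightarrow> real ^ 3" and P \<phi> :: "real \<Rightarrow> sp \<Rightarrow> real"
  assumes U: "\<And>j. (\<lambda>(s, x). u s x $ j) \<in> Alg" and P: "(\<lambda>(s, x). P s x) \<in> Alg"
    and \<Phi>: "(\<lambda>(s, x). \<phi> s x) \<in> Alg"
    and per: "\<forall>s>0. periodic (u s) \<and> periodic (P s) \<and> periodic (\<phi> s)"
    and t: "t > 0" and \<epsilon>: "\<epsilon> \<noteq> 0"
    and NS: "\<forall>x. vector_derivative (\<lambda>s. u s x) (at t) + advect (u t) (u t) x + grad (P t) x
      = \<mu> *\<^sub>R vlapl (u t) x + dEop k \<epsilon> M1 M2 \<alpha> \<beta> (\<phi> t) x *\<^sub>R grad (\<phi> t) x"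
    and incompr: "\<forall>x. divg (u t) x = 0"
    and PF: "\<forall>x. deriv (\<lambda>s. \<phi> s x) t + u t x \<bullet> grad (\<phi> t) x = - \<gamma> * dEop k \<epsilon> M1 M2 \<alpha> \<beta> (\<phi> t) x"
  shows "((\<lambda>s. 1/2 * L2sqv (u s) + Eop k \<epsilon> M1 M2 \<alpha> \<beta> (\<phi> s)) has_real_derivative
      - (\<mu> * gradL2sqv (u t) + \<gamma> * L2sq (dEop k \<epsilon> M1 M2 \<alpha> \<beta> (\<phi> t)))) (at t)"
proof -
  define U where "U j = (\<lambda>(s, x). u s x $ j)" for j
  define Pf where "Pf = (\<lambda>(s, x). P s x)"
  define \<Phi>f where "\<Phi>f = (\<lambda>(s, x). \<phi> s x)"
  have mem: "U j \<in> Alg" "Pf \<in> Alg" "\<Phi>f \<in> Alg" for j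
    using U P \<Phi> by (simp_all add: U_def Pf_def \<Phi>f_def)
  have per_st: "periodic_st (U j)" "periodic_st Pf" "periodic_st \<Phi>f" for j
    using per by (simp_all add: periodic_st_def periodic_def U_def Pf_def \<Phi>f_def)
  have slice: "(\<lambda>x. U j (s, x)) = (\<lambda>x. u s x $ j)" "(\<lambda>x. Pf (s, x)) = P s" "(\<lambda>x. \<Phi>f (s, x)) = \<phi> s"
    for s j by (simp_all add: U_def Pf_def \<Phi>f_def)
  have pd_u: "pd i (\<lambda>y. u t y $ j) = (\<lambda>x. dx i (U j) (t, x))" for i j
    using pd_slice[OF mem(1) t] by (simp add: slice)
  have grad_\<phi>: "grad (\<phi> t) x $ j = dx j \<Phi>f (t, x)" for x j
    using grad_slice[OF mem(3) t] by (simp add: slice)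
  have dE: "dEop k \<epsilon> M1 M2 \<alpha> \<beta> (\<phi> t) x = dEop_st k \<epsilon> M1 M2 \<alpha> \<beta> \<Phi>f t (t, x)" for x
    using dEop_slice[OF mem(3) t] by (simp add: slice)
  have NS_st: "dt (U j) (t, x) + (\<Sum>i\<in>UNIV. U i (t, x) * dx i (U j) (t, x)) + dx j Pf (t, x)
      = \<mu> * lapl_st (U j) (t, x) + dEop_st k \<epsilon> M1 M2 \<alpha> \<beta> \<Phi>f t (t, x) * dx j \<Phi>f (t, x)" for j x
    using momentum_equation_slab[OF U P t NS[rule_format, of x], of j]
    by (simp add: U_def Pf_def grad_\<phi> dE)
  have div_st: "(\<Sum>i\<in>UNIV. dx i (U i) (t, x)) = 0" for x
    using incompr by (simp add: divg_def pd_u)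
  have PF_st: "dt \<Phi>f (t, x) + (\<Sum>i\<in>UNIV. U i (t, x) * dx i \<Phi>f (t, x)) = - \<gamma> * dEop_st k \<epsilon> M1 M2 \<alpha> \<beta> \<Phi>f t (t, x)"
    for x
  proof -
    have "deriv (\<lambda>s. \<phi> s x) t = dt \<Phi>f (t, x)"
      using DERIV_imp_deriv[OF has_real_derivative_time[OF mem(3) t]] by (simp add: \<Phi>f_def)
    then show ?thesis
      using PF[rule_format, of x] by (simp add: inner_vec_def grad_\<phi> dE U_def)
  qed
  have energy: "1/2 * L2sqv (u s) + Eop k \<epsilon> M1 M2 \<alpha> \<beta> (\<phi> s)
      = 1/2 * cell_integral s (\<lambda>p. \<Sum>j\<in>UNIV. (U j p)\<^sup>2)
        + (k/(2*\<epsilon>) * cell_integral s (\<lambda>p. (fop_st \<epsilon> \<Phi>f p)\<^sup>2)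
        + 1/2 * M1 * (cell_integral s \<Phi>f - \<alpha>)\<^sup>2 + 1/2 * M2 * (cell_integral s (Bdens_st \<epsilon> \<Phi>f) - \<beta>)\<^sup>2)"
    if "s > 0" for s
    using Eop_slice[OF mem(3) that] by (simp add: slice L2sqv_def cell_integral_def power2_norm_vec U_def)
  have gradL2sqv: "gradL2sqv (u t) = cell_integral t (\<lambda>p. \<Sum>j\<in>UNIV. \<Sum>i\<in>UNIV. (dx i (U j) p)\<^sup>2)"
    by (simp add: gradL2sqv_def cell_integral_def grad_def pd_u power2_norm_vec)
  have L2sq: "L2sq (dEop k \<epsilon> M1 M2 \<alpha> \<beta> (\<phi> t)) = cell_integral t (\<lambda>p. (dEop_st k \<epsilon> M1 M2 \<alpha> \<beta> \<Phi>f t p)\<^sup>2)"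
    by (simp add: L2sq_def cell_integral_def dE)
  show ?thesis
    unfolding gradL2sqv L2sq
    using energy_dissipation_st[OF mem(1) per_st(1) mem(2) per_st(2) mem(3) per_st(3) t \<epsilon> div_st NS_st PF_st]
  proof (rule has_field_derivative_transform_within_open[OF _ open_greaterThan[of 0]])
    show "t \<in> {0<..}" using t by simp
  qed (simp only: energy greaterThan_iff)
qed

end

theorem lemma2p3:
  fixes k \<epsilon> \<gamma> \<mu> M1 M2 :: real
    and u :: "real \<Rightarrow> sp \<Rightarrow> real ^ 3" and P :: "real \<Rightarrow> sp \<Rightarrow> real"
    and \<phi> :: "real \<Rightarrow> sp \<Rightarrow> real"
    and u0 :: "sp \<Rightarrow> real ^ 3" and \<phi>0 :: "sp \<Rightarrow> real"
  assumes pos: "k > 0" "\<epsilon> > 0" "\<gamma> > 0" "\<mu> > 0" "M1 > 0" "M2 > 0"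
    and u0: "smooth_on UNIV u0" "periodic u0" "\<forall>x. divg u0 x = 0" "integral Qcube u0 = 0"
    and \<phi>0: "smooth_on UNIV \<phi>0" "periodic \<phi>0"
    and sm_u: "smooth_on ({0<..} \<times> UNIV) (\<lambda>(t, x). u t x)"
    and sm_P: "smooth_on ({0<..} \<times> UNIV) (\<lambda>(t, x). P t x)"
    and sm_\<phi>: "smooth_on ({0<..} \<times> UNIV) (\<lambda>(t, x). \<phi> t x)"
    and cont_u: "continuous_on ({0..} \<times> UNIV) (\<lambda>(t, x). u t x)"
    and cont_\<phi>: "continuous_on ({0..} \<times> UNIV) (\<lambda>(t, x). \<phi> t x)"
    and per: "\<forall>t\<ge>0. periodic (u t) \<and> periodic (P t) \<and> periodic (\<phi> t)"
    and init: "u 0 = u0" "\<phi> 0 = \<phi>0"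
    and NS: "\<forall>t>0. \<forall>x. vector_derivative (\<lambda>s. u s x) (at t) + advect (u t) (u t) x + grad (P t) x
               = \<mu> *\<^sub>R vlapl (u t) x
                 + dEop k \<epsilon> M1 M2 (Aop \<phi>0) (Bop \<epsilon> \<phi>0) (\<phi> t) x *\<^sub>R grad (\<phi> t) x"
    and incompr: "\<forall>t>0. \<forall>x. divg (u t) x = 0"
    and PF: "\<forall>t>0. \<forall>x. deriv (\<lambda>s. \<phi> s x) t + u t x \<bullet> grad (\<phi> t) x
               = - \<gamma> * dEop k \<epsilon> M1 M2 (Aop \<phi>0) (Bop \<epsilon> \<phi>0) (\<phi> t) x"
  shows "\<forall>t>0. ((\<lambda>s. 1/2 * L2sqv (u s) + Eop k \<epsilon> M1 M2 (Aop \<phi>0) (Bop \<epsilon> \<phi>0) (\<phi> s))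
            has_real_derivative
              - (\<mu> * gradL2sqv (u t) + \<gamma> * L2sq (dEop k \<epsilon> M1 M2 (Aop \<phi>0) (Bop \<epsilon> \<phi>0) (\<phi> t)))) (at t)"
proof (intro allI impI)
  fix t :: real assume t: "t > 0"
  have slab: "{0<..} \<times> UNIV = slab" by (simp add: slab_def)
  obtain A\<phi> where A\<phi>: "(\<lambda>(t, x). \<phi> t x) \<in> A\<phi>" "smooth_gen slab A\<phi>"
    using smooth_on_imp_smooth_gen[OF sm_\<phi>[unfolded slab] open_slab] by blast
  obtain AP where AP: "(\<lambda>(t, x). P t x) \<in> AP" "smooth_gen slab AP"
    using smooth_on_imp_smooth_gen[OF sm_P[unfolded slab] open_slab] by blast
  obtain Au where Au: "\<And>j. (\<lambda>p. (case p of (t, x) \<Rightarrow> u t x) $ j) \<in> Au" "smooth_gen slab Au"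
    using smooth_on_imp_smooth_gen_components[OF sm_u[unfolded slab] open_slab] by blast
  interpret smooth_st "A\<phi> \<union> AP \<union> Au"
    unfolding smooth_st_def using A\<phi>(2) AP(2) Au(2) by (intro smooth_gen_Un)
  have "(\<lambda>(t, x). u t x $ j) \<in> Alg" for j
    using gen_alg.gen[OF UnI2, OF Au(1)[of j]] by (simp add: case_prod_beta')
  moreover have "(\<lambda>(t, x). P t x) \<in> Alg" "(\<lambda>(t, x). \<phi> t x) \<in> Alg"
    using A\<phi>(1) AP(1) by (auto intro: gen_alg.gen)
  moreover have "\<forall>s>0. periodic (u s) \<and> periodic (P s) \<and> periodic (\<phi> s)"
    using per by simp
  ultimately show "((\<lambda>s. 1/2 * L2sqv (u s) + Eop k \<epsilon> M1 M2 (Aop \<phi>0) (Bop \<epsilon> \<phi>0) (\<phi> s)) has_real_derivative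
      - (\<mu> * gradL2sqv (u t) + \<gamma> * L2sq (dEop k \<epsilon> M1 M2 (Aop \<phi>0) (Bop \<epsilon> \<phi>0) (\<phi> t)))) (at t)"
    using NS t incompr PF pos(2) by (intro energy_dissipation) (blast | simp)+
qed

end
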